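(* Let $\mathcal V$ be a multivector field on $X$ and $S\subset X$. If $S$ is an isolated invariant set, then $S$ is locally closed.
   Context: $X$ is a finite $T_0$ topological space. For $A\subset X$, $\operatorname{cl}A$ is its closure and $\operatorname{mo}A:=\operatorname{cl}A\setminus A$. $A$ is locally closed if it is the intersection of an open and a closed subset of $X$. $H$ denotes relative singular homology. A multivector is a nonempty locally closed subset of $X$; a multivector field $\mathcal V$ on $X$ is a partition of $X$ into multivectors. For $x\in X$, $[x]$ denotes the element of $\mathcal V$ containing $x$. A multivector $V$ is critical if $H(\operatorname{cl}V,\operatorname{mo}V)\neq0$, regular otherwise. Put $\Pi_{\mathcal V}(x):=[x]\cup\operatorname{cl}\{x\}$ and $\Pi_{\mathcal V}(A):=\bigcup_{x\in A}\Pi_{\mathcal V}(x)$. A $\mathbb Z$-interval is $\mathbb Z\cap I$ for a real interval $I$. A solution in $A\subset X$ is a map $\varphi:D\to A$ on a $\mathbb Z$-interval $D$ with $\varphi(i+1)\in\Pi_{\mathcal V}(\varphi(i))$ whenever $i,i+1\in D$; it is full if $D=\mathbb Z$, and a path if $D$ is bounded, its endpoints being $\varphi(\min D)$ and $\varphi(\max D)$. A full solution $\varphi$ is essential if for every $t\in\mathbb Z$ with $[\varphi(t)]$ regular, the set $\{s\in\mathbb Z:\varphi(s)\notin[\varphi(t)]\}$ is unbounded below and unbounded above. $\operatorname{Inv}A$ is the set of $x\in A$ such that there is an essential full solution $\varphi$ with image in $A$ and $\varphi(0)=x$; $A$ is invariant if $\operatorname{Inv}A=A$. A closed set $N$ isolates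 an invariant set $S\subset N$ if (a) every path in $N$ with both endpoints in $S$ has image contained in $S$, and (b) $\Pi_{\mathcal V}(S)\subset N$. An invariant set is an isolated invariant set if some closed set isolates it. *)

theory Defs
  imports "HOL-Homology.Homology" "HOL-Analysis.Abstract_Topological_Spaces"
begin

definition locally_closed_in :: "'a topology \<Rightarrow> 'a set \<Rightarrow> bool" where
  "locally_closed_in X A \<longleftrightarrow> (\<exists>U C. openin X U \<and> closedin X C \<and> A = U \<inter> C)"

definition mouth :: "'a topology \<Rightarrow> 'a set \<Rightarrow> 'a set" where
  "mouth X A = X closure_of A - A"

definition multivector :: "'a topology \<Rightarrow> 'a set \<Rightarrow> bool" where
  "multivector X A \<longleftrightarrow> A \<noteq> {} \<and> locally_closed_in X A"

definition multivector_field :: "'a topology \<Rightarrow> 'a set set \<Rightarrow> bool" where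
  "multivector_field X V \<longleftrightarrow>
     (\<forall>A\<in>V. multivector X A) \<and> \<Union>V = topspace X \<and>
     (\<forall>A\<in>V. \<forall>B\<in>V. A \<noteq> B \<longrightarrow> A \<inter> B = {})"

definition mv_class :: "'a set set \<Rightarrow> 'a \<Rightarrow> 'a set" where
  "mv_class V x = (THE A. A \<in> V \<and> x \<in> A)"

definition critical :: "'a topology \<Rightarrow> 'a set \<Rightarrow> bool" where
  "critical X A \<longleftrightarrow>
     (\<exists>p. \<not> trivial_group (relative_homology_group p (subtopology X (X closure_of A)) (mouth X A)))"

definition Pi_V :: "'a topology \<Rightarrow> 'a set set \<Rightarrow> 'a \<Rightarrow> 'a set" where
  "Pi_V X V x = mv_class V x \<union> X closure_of {x}"

definition Pi_V_set :: "'a topology \<Rightarrow> 'a set set \<Rightarrow> 'a set \<Rightarrow> 'a set" where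
  "Pi_V_set X V A = (\<Union>x\<in>A. Pi_V X V x)"

definition essential_solution :: "'a topology \<Rightarrow> 'a set set \<Rightarrow> (int \<Rightarrow> 'a) \<Rightarrow> bool" where
  "essential_solution X V \<phi> \<longleftrightarrow>
     (\<forall>i. \<phi> (i + 1) \<in> Pi_V X V (\<phi> i)) \<and>
     (\<forall>t. \<not> critical X (mv_class V (\<phi> t)) \<longrightarrow>
        (\<forall>n. \<exists>s<n. \<phi> s \<notin> mv_class V (\<phi> t)) \<and>
        (\<forall>n. \<exists>s>n. \<phi> s \<notin> mv_class V (\<phi> t)))"

definition Inv :: "'a topology \<Rightarrow> 'a set set \<Rightarrow> 'a set \<Rightarrow> 'a set" where
  "Inv X V A = {x \<in> A. \<exists>\<phi>. essential_solution X V \<phi> \<and> range \<phi> \<subseteq> A \<and> \<phi> 0 = x}"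

definition invariant :: "'a topology \<Rightarrow> 'a set set \<Rightarrow> 'a set \<Rightarrow> bool" where
  "invariant X V A \<longleftrightarrow> Inv X V A = A"

definition is_path_in :: "'a topology \<Rightarrow> 'a set set \<Rightarrow> 'a set \<Rightarrow> int \<Rightarrow> int \<Rightarrow> (int \<Rightarrow> 'a) \<Rightarrow> bool" where
  "is_path_in X V A a b \<phi> \<longleftrightarrow> a \<le> b \<and> \<phi> ` {a..b} \<subseteq> A \<and>
     (\<forall>i. a \<le> i \<and> i < b \<longrightarrow> \<phi> (i + 1) \<in> Pi_V X V (\<phi> i))"

definition isolates :: "'a topology \<Rightarrow> 'a set set \<Rightarrow> 'a set \<Rightarrow> 'a set \<Rightarrow> bool" where
  "isolates X V N S \<longleftrightarrow> closedin X N \<and> S \<subseteq> N \<and>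
     (\<forall>a b \<phi>. is_path_in X V N a b \<phi> \<and> \<phi> a \<in> S \<and> \<phi> b \<in> S \<longrightarrow> \<phi> ` {a..b} \<subseteq> S) \<and>
     Pi_V_set X V S \<subseteq> N"

definition isolated_invariant :: "'a topology \<Rightarrow> 'a set set \<Rightarrow> 'a set \<Rightarrow> bool" where
  "isolated_invariant X V S \<longleftrightarrow> invariant X V S \<and> (\<exists>N. isolates X V N S)"

end

theory Submission
  imports Defs
begin

text \<open>If the mouth of S met the closure of one of its points y in a point x of S, then
  z \<rightarrow> y \<rightarrow> x, with z \<in> S and y \<in> cl {z}, would be a path in the isolating block
  with both endpoints in S passing through y \<notin> S. Hence the mouth is closed under taking
  closures of points; as the space is finite, this makes the mouth closed, and
  S = cl S - mo S is locally closed.\<close>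

lemma closure_of_finite_eq_UN_closure_of_points:
  assumes "finite A"
  shows "X closure_of A = (\<Union>z\<in>A. X closure_of {z})"
proof -
  have "X closure_of (\<Union>z\<in>A. {z}) = (\<Union>z\<in>A. X closure_of {z})"
    using closure_of_Union[of "(\<lambda>z. {z}) ` A" X] assms by (simp add: image_image)
  then show ?thesis by simp
qed

lemma closedin_if_closure_of_points_subset:
  assumes "finite M" "M \<subseteq> topspace X" "\<And>y. y \<in> M \<Longrightarrow> X closure_of {y} \<subseteq> M"
  shows "closedin X M"
proof -
  have "X closure_of M \<subseteq> M"
    using assms(3) unfolding closure_of_finite_eq_UN_closure_of_points[OF assms(1)] by blast
  with assms(2) show ?thesis
    by (metis closure_of_subset_eq)
qed

lemma locally_closed_in_if_closedin_mouth:
  assumes "S \<subseteq> topspace X" "closedin X (mouth X S)"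
  shows "locally_closed_in X S"
  unfolding locally_closed_in_def
proof (intro exI conjI)
  show "openin X (topspace X - mouth X S)"
    using assms(2) by (rule openin_diff[OF openin_topspace])
  show "closedin X (X closure_of S)"
    by (rule closedin_closure_of)
  show "S = (topspace X - mouth X S) \<inter> X closure_of S"
    using closure_of_subset[OF assms(1)] assms(1) unfolding mouth_def by blast
qed

lemma isolates_two_step_path_in:
  assumes N: "isolates X V N S"
    and "z \<in> S" "y \<in> Pi_V X V z" "x \<in> Pi_V X V y" "x \<in> S"
  shows "y \<in> S"
proof -
  define \<phi> where "\<phi> = (\<lambda>i::int. if i = 0 then z else if i = 1 then y else x)"
  have two: "{0..2::int} = {0, 1, 2}" by auto
  have "y \<in> N" "S \<subseteq> N"
    using N \<open>z \<in> S\<close> \<open>y \<in> Pi_V X V z\<close> by (auto simp: isolates_def Pi_V_set_def)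
  then have "is_path_in X V N 0 2 \<phi>"
    unfolding is_path_in_def
  proof (intro conjI allI impI)
    show "\<phi> ` {0..2} \<subseteq> N"
      using \<open>y \<in> N\<close> \<open>S \<subseteq> N\<close> assms(2,5) by (auto simp: \<phi>_def two)
    fix i :: int assume "0 \<le> i \<and> i < 2"
    then have "i = 0 \<or> i = 1" by auto
    then show "\<phi> (i + 1) \<in> Pi_V X V (\<phi> i)"
      using assms(3,4) by (auto simp: \<phi>_def)
  qed simp
  moreover have "\<phi> 0 \<in> S" "\<phi> 2 \<in> S"
    using assms(2,5) by (auto simp: \<phi>_def)
  ultimately have "\<phi> ` {0..2} \<subseteq> S"
    using N unfolding isolates_def by blast
  moreover have "\<phi> 1 \<in> \<phi> ` {0..2}"
    by simp
  ultimately have "\<phi> 1 \<in> S"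
    by blast
  then show ?thesis
    by (simp add: \<phi>_def)
qed

lemma closure_of_point_in_mouth_subset_mouth:
  assumes "finite S" "isolates X V N S" "y \<in> mouth X S"
  shows "X closure_of {y} \<subseteq> mouth X S"
proof
  fix x assume x: "x \<in> X closure_of {y}"
  have y: "y \<in> X closure_of S" "y \<notin> S"
    using assms(3) by (auto simp: mouth_def)
  obtain z where z: "z \<in> S" "y \<in> X closure_of {z}"
    using y(1) by (auto simp: closure_of_finite_eq_UN_closure_of_points[OF assms(1)])
  have "X closure_of {y} \<subseteq> X closure_of S"
    using y(1) by (simp add: closure_of_minimal)
  with x have "x \<in> X closure_of S" by blast
  moreover have "x \<notin> S"
  proof
    assume "x \<in> S"
    have "y \<in> Pi_V X V z" "x \<in> Pi_V X V y"
      using z(2) x by (auto simp: Pi_V_def)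
    with \<open>x \<in> S\<close> have "y \<in> S"
      using isolates_two_step_path_in[OF assms(2) z(1)] by blast
    with y(2) show False ..
  qed
  ultimately show "x \<in> mouth X S"
    by (simp add: mouth_def)
qed

theorem proposition4p11:
  fixes X :: "'a topology" and V :: "'a set set" and S :: "'a set"
  assumes "finite (topspace X)" and "t0_space X"
    and "multivector_field X V"
    and "S \<subseteq> topspace X"
    and "isolated_invariant X V S"
  shows "locally_closed_in X S"
proof -
  obtain N where N: "isolates X V N S"
    using assms(5) by (auto simp: isolated_invariant_def)
  have "mouth X S \<subseteq> topspace X"
    using closure_of_subset_topspace[of X S] by (auto simp: mouth_def)
  moreover have "finite S"
    using assms(1,4) finite_subset by blast
  ultimately have "closedin X (mouth X S)"
    using assms(1) finite_subset closure_of_point_in_mouth_subset_mouth[OF _ N]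
    by (metis closedin_if_closure_of_points_subset)
  then show ?thesis
    by (rule locally_closed_in_if_closedin_mouth[OF assms(4)])
qed

end
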